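(* For Lebesgue almost every $x\in[0,1]$ and for every $i\in\mathbb{N}$, $$\nu_i(x)=\lim_{n\to\infty}\frac{N_i(x,n)}{n}$$ exists and equals $0$.
   Context: Every irrational $x\in(0,1)$ has a unique representation ($\bar O^1$-expansion) $$x=\sum_{k=1}^\infty\frac{(-1)^{k-1}}{g_1(g_1+g_2)\cdots(g_1+g_2+\dots+g_k)},\qquad g_k=g_k(x)\in\mathbb{N}=\{1,2,3,\dots\}.$$ The $g_k(x)$ are the $\bar O^1$-symbols of $x$. For $i,n\in\mathbb{N}$, $N_i(x,n)$ is the number of indices $k\in\{1,\dots,n\}$ with $g_k(x)=i$, and $\nu_i(x)$ (the asymptotic frequency of the symbol $i$) is the limit of $N_i(x,n)/n$ when it exists. *)

theory Defs
  imports "HOL-Analysis.Analysis"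
begin

text \<open>A sequence g (indexed from 0; g 0 plays the role of g_1) of positive integers
is an O-bar-1 expansion of x if
  x = sum_{k>=0} (-1)^k / prod_{j=0..k} (g 0 + ... + g j).\<close>
definition Obar_expansion :: "(nat \<Rightarrow> nat) \<Rightarrow> real \<Rightarrow> bool" where
  "Obar_expansion g x \<longleftrightarrow> (\<forall>k. g k \<ge> 1) \<and>
     (\<lambda>k. (-1) ^ k / (\<Prod>j\<le>k. real (\<Sum>i\<le>j. g i))) sums x"

text \<open>The k-th symbol g_k(x), k >= 1 (uniquely determined for irrational x in (0,1)).\<close>
definition Obar_symbol :: "real \<Rightarrow> nat \<Rightarrow> nat" where
  "Obar_symbol x k = (THE g. Obar_expansion g x) (k - 1)"

definition Obar_count :: "nat \<Rightarrow> real \<Rightarrow> nat \<Rightarrow> nat" where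
  "Obar_count i x n = card {k \<in> {1..n}. Obar_symbol x k = i}"

end

theory Submission
  imports Defs
begin

(*
  The symbols are produced by the algorithm y_0 = x, q_(k+1) = floor (1/y_k),
  y_(k+1) = 1 - q_(k+1) y_k, whose values q_k = g_1 + ... + g_k satisfy y_k < 1/(q_k + 1);
  uniqueness of the expansion identifies them with the O-bar-1 symbols.  Each branch
  y |-> 1 - m y of the algorithm maps (1/(m+1), 1/m] affinely onto [0, 1/(m+1)), so under
  Lebesgue measure on (0,1] the law of (q_k, y_k) is a mixture of uniform laws on the intervals
  (0, 1/(Q+1)] with Q >= k.  Hence the symbol at position k+1 equals i with probability at most
  1/(k+1), the expected number of i's among the first n symbols is at most 2 sqrt n, and
  sum_j N_i(x,4^j)/4^j has finite integral.  So N_i(x,4^j)/4^j -> 0 almost everywhere, and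
  monotonicity of N_i in n interpolates between consecutive powers of 4.
*)

section \<open>The expansion algorithm\<close>

(* (obar_rem x k, obar_psum x k) is the state (y_k, q_k) of the algorithm, and obar_digit x k
   is the symbol g_(k+1), indexed from 0 as in Obar_expansion. *)
fun obar_rem :: "real \<Rightarrow> nat \<Rightarrow> real" where
  "obar_rem x 0 = x"
| "obar_rem x (Suc k) = 1 - of_int \<lfloor>1 / obar_rem x k\<rfloor> * obar_rem x k"

fun obar_psum :: "real \<Rightarrow> nat \<Rightarrow> nat" where
  "obar_psum x 0 = 0"
| "obar_psum x (Suc k) = nat \<lfloor>1 / obar_rem x k\<rfloor>"

definition obar_digit :: "real \<Rightarrow> nat \<Rightarrow> nat" where
  "obar_digit x k = obar_psum x (Suc k) - obar_psum x k"

lemma floor_inverse_step: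
  fixes y :: real and Q :: nat
  assumes irr: "y \<notin> \<rat>" and pos: "0 < y" and small: "y < 1 / (real Q + 1)"
  shows "\<lfloor>1/y\<rfloor> \<ge> int Q + 1" "1 - \<lfloor>1/y\<rfloor> * y \<notin> \<rat>"
    "0 < 1 - \<lfloor>1/y\<rfloor> * y" "1 - \<lfloor>1/y\<rfloor> * y < 1 / (\<lfloor>1/y\<rfloor> + 1)"
proof -
  define m :: real where "m = \<lfloor>1/y\<rfloor>"
  have "real Q + 1 < 1/y" using small pos by (simp add: field_simps)
  then show "\<lfloor>1/y\<rfloor> \<ge> int Q + 1" by (simp add: le_floor_iff)
  then have m_pos: "(0::real) < m" unfolding m_def by linarith
  have "1/y \<notin> \<rat>" using irr by (metis Rats_inverse inverse_eq_divide inverse_inverse_eq)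
  then have "m \<noteq> 1/y" unfolding m_def by (metis Rats_of_int)
  then have "m < 1/y" unfolding m_def by (simp add: order_less_le)
  then have "m * y < 1" using pos by (simp add: field_simps)
  then show "0 < 1 - \<lfloor>1/y\<rfloor> * y" unfolding m_def by simp
  have "1/y < m + 1" unfolding m_def by linarith
  then have "1 < (m + 1) * y" using pos by (simp add: field_simps)
  then have "m * 1 < m * ((m + 1) * y)" using m_pos by (rule mult_strict_left_mono)
  then have "(1 - m * y) * (m + 1) < 1" by (simp add: algebra_simps)
  then have "1 - m * y < 1 / (m + 1)" using m_pos by (simp add: field_simps)
  then show "1 - \<lfloor>1/y\<rfloor> * y < 1 / (\<lfloor>1/y\<rfloor> + 1)" unfolding m_def by simp
  show "1 - \<lfloor>1/y\<rfloor> * y \<notin> \<rat>"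
  proof
    assume "1 - \<lfloor>1/y\<rfloor> * y \<in> \<rat>"
    from Rats_divide[OF Rats_diff[OF Rats_1 this] Rats_of_int]
    have "(1 - (1 - m * y)) / m \<in> \<rat>" unfolding m_def .
    moreover have "(1 - (1 - m * y)) / m = y" using m_pos by simp
    ultimately show False using irr by simp
  qed
qed

lemma obar_rem_bounds:
  assumes "x \<notin> \<rat>" "0 < x" "x < 1"
  shows "obar_rem x k \<notin> \<rat> \<and> 0 < obar_rem x k \<and> obar_rem x k < 1 / (real (obar_psum x k) + 1)"
proof (induction k)
  case 0
  then show ?case using assms by simp
next
  case (Suc k)
  then have step: "\<lfloor>1 / obar_rem x k\<rfloor> \<ge> int (obar_psum x k) + 1"
    "1 - \<lfloor>1 / obar_rem x k\<rfloor> * obar_rem x k \<notin> \<rat>"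
    "0 < 1 - \<lfloor>1 / obar_rem x k\<rfloor> * obar_rem x k"
    "1 - \<lfloor>1 / obar_rem x k\<rfloor> * obar_rem x k < 1 / (\<lfloor>1 / obar_rem x k\<rfloor> + 1)"
    using floor_inverse_step by blast+
  then have "real (obar_psum x (Suc k)) = of_int \<lfloor>1 / obar_rem x k\<rfloor>" by simp
  with step show ?case by simp
qed

lemma strict_mono_obar_psum:
  assumes "x \<notin> \<rat>" "0 < x" "x < 1"
  shows "strict_mono (obar_psum x)"
proof (rule strict_mono_Suc_iff[THEN iffD2], intro allI)
  fix k
  have "\<lfloor>1 / obar_rem x k\<rfloor> \<ge> int (obar_psum x k) + 1"
    using obar_rem_bounds[OF assms] floor_inverse_step by blast
  then show "obar_psum x k < obar_psum x (Suc k)" by simp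
qed

lemma obar_psum_pos:
  assumes "x \<notin> \<rat>" "0 < x" "x < 1"
  shows "0 < obar_psum x (Suc k)"
  using strict_mono_obar_psum[OF assms] by (metis gr_zeroI not_less0 strict_monoD zero_less_Suc)

lemma sum_obar_digit:
  assumes "x \<notin> \<rat>" "0 < x" "x < 1"
  shows "(\<Sum>i\<le>j. obar_digit x i) = obar_psum x (Suc j)"
proof (induction j)
  case 0
  then show ?case by (simp add: obar_digit_def)
next
  case (Suc j)
  then show ?case using strict_mono_obar_psum[OF assms, THEN strict_monoD, of "Suc j" "Suc (Suc j)"]
    by (simp add: obar_digit_def del: obar_psum.simps)
qed

lemma obar_rem_identity:
  assumes "x \<notin> \<rat>" "0 < x" "x < 1"
  shows "x = (\<Sum>k<n. (-1)^k / (\<Prod>j\<le>k. real (obar_psum x (Suc j))))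
            + (-1)^n * obar_rem x n / (\<Prod>j<n. real (obar_psum x (Suc j)))"
proof (induction n)
  case 0
  then show ?case by simp
next
  case (Suc n)
  define P where "P = (\<Prod>j<n. real (obar_psum x (Suc j)))"
  define q where "q = real (obar_psum x (Suc n))"
  have "P > 0" unfolding P_def using obar_psum_pos[OF assms] by (intro prod_pos) simp
  moreover have "q > 0" unfolding q_def using obar_psum_pos[OF assms] by simp
  moreover have "obar_rem x (Suc n) = 1 - q * obar_rem x n"
    using obar_rem_bounds[OF assms, of n] by (simp add: q_def)
  ultimately have "(-1)^n * obar_rem x n / P
      = (-1)^n / (P * q) + (-1)^Suc n * obar_rem x (Suc n) / (P * q)"
    by (simp add: field_simps)
  moreover have "(\<Prod>j\<le>n. real (obar_psum x (Suc j))) = P * q"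
    "(\<Prod>j<Suc n. real (obar_psum x (Suc j))) = P * q"
    unfolding P_def q_def by (simp_all add: lessThan_Suc_atMost[symmetric] del: obar_psum.simps)
  ultimately show ?case using Suc.IH unfolding P_def q_def by (simp del: obar_psum.simps)
qed

lemma obar_expansion_obar_digit:
  assumes "x \<notin> \<rat>" "0 < x" "x < 1"
  shows "Obar_expansion (obar_digit x) x"
  unfolding Obar_expansion_def
proof (intro conjI allI)
  fix k
  show "obar_digit x k \<ge> 1"
    using strict_mono_obar_psum[OF assms, THEN strict_monoD, of k "Suc k"] by (simp add: obar_digit_def)
next
  define P where "P n = (\<Prod>j<n. real (obar_psum x (Suc j)))" for n
  have "P n \<ge> 1" for n
    unfolding P_def using obar_psum_pos[OF assms] by (intro prod_ge_1) (simp add: Suc_le_eq)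
  then have "\<bar>(-1)^n * obar_rem x n / P n\<bar> \<le> 1 / (real n + 1)" for n
  proof -
    have "obar_rem x n < 1 / (real (obar_psum x n) + 1)" "0 < obar_rem x n"
      using obar_rem_bounds[OF assms] by auto
    moreover have "1 / (real (obar_psum x n) + 1) \<le> 1 / (real n + 1)"
      using strict_mono_imp_increasing[OF strict_mono_obar_psum[OF assms], of n]
      by (intro divide_left_mono) auto
    moreover have "obar_rem x n / P n \<le> obar_rem x n"
      using \<open>P n \<ge> 1\<close> \<open>0 < obar_rem x n\<close> by (simp add: divide_le_eq)
    ultimately show ?thesis using \<open>P n \<ge> 1\<close> by (simp add: abs_mult)
  qed
  then have "(\<lambda>n. (-1)^n * obar_rem x n / P n) \<longlonglongrightarrow> 0"
    by (intro Lim_null_comparison[OF _ LIMSEQ_inverse_real_of_nat])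
      (simp add: inverse_eq_divide add.commute)
  then have "(\<lambda>n. x - (-1)^n * obar_rem x n / P n) \<longlonglongrightarrow> x"
    using tendsto_diff[OF tendsto_const] by fastforce
  moreover have "x - (-1)^n * obar_rem x n / P n = (\<Sum>k<n. (-1)^k / (\<Prod>j\<le>k. real (\<Sum>i\<le>j. obar_digit x i)))" for n
    using obar_rem_identity[OF assms, of n] by (simp add: P_def sum_obar_digit[OF assms])
  ultimately show "(\<lambda>k. (-1)^k / (\<Prod>j\<le>k. real (\<Sum>i\<le>j. obar_digit x i))) sums x"
    unfolding sums_def by simp
qed

lemma alternating_series_strict_bounds:
  fixes a :: "nat \<Rightarrow> real"
  assumes "a \<longlonglongrightarrow> 0" "\<And>n. 0 < a n" "\<And>n. a (Suc n) < a n"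
  shows "a 0 - a 1 < (\<Sum>i. (-1)^i * a i)" "(\<Sum>i. (-1)^i * a i) < a 0"
proof -
  have "\<And>n. a (Suc n) \<le> a n" "\<And>n. 0 \<le> a n" using assms(2,3) less_imp_le by blast+
  note partial_sums = summable_Leibniz'(2,4)[OF assms(1) this(2,1)]
  have "a 0 - a 1 + a 2 - a 3 \<le> (\<Sum>i. (-1)^i * a i)"
    using partial_sums(1)[of 2] by (simp add: numeral_eq_Suc)
  moreover have "a 3 < a 2" using assms(3)[of 2] by (simp add: numeral_eq_Suc)
  ultimately show "a 0 - a 1 < (\<Sum>i. (-1)^i * a i)" by linarith
  have "(\<Sum>i. (-1)^i * a i) \<le> a 0 - a 1 + a 2"
    using partial_sums(2)[of 1] by (simp add: numeral_eq_Suc)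
  moreover have "a 2 < a 1" using assms(3)[of 1] by (simp add: numeral_eq_Suc)
  ultimately show "(\<Sum>i. (-1)^i * a i) < a 0" by linarith
qed

(* For any expansion g of x, obar_tail g n obeys the recursion defining obar_rem x n, which
   forces g = obar_digit x. *)
definition obar_term :: "(nat \<Rightarrow> nat) \<Rightarrow> nat \<Rightarrow> nat \<Rightarrow> real" where
  "obar_term g n k = 1 / (\<Prod>j\<le>k. real (\<Sum>i\<le>n+j. g i))"

definition obar_tail :: "(nat \<Rightarrow> nat) \<Rightarrow> nat \<Rightarrow> real" where
  "obar_tail g n = (\<Sum>k. (-1)^k * obar_term g n k)"

context
  fixes g :: "nat \<Rightarrow> nat"
  assumes digits_ge_1: "\<And>k. 1 \<le> g k"
begin

lemma partial_sum_ge: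
  shows "real n + 1 \<le> real (\<Sum>i\<le>n. g i)"
proof -
  have "(\<Sum>i\<le>n. 1) \<le> (\<Sum>i\<le>n. g i)" using digits_ge_1 by (intro sum_mono)
  then show ?thesis by (simp del: of_nat_sum)
qed

lemma obar_term_pos:
  shows "0 < obar_term g n k"
  unfolding obar_term_def
proof (intro divide_pos_pos prod_pos ballI)
  fix j
  show "0 < real (\<Sum>i\<le>n+j. g i)" using partial_sum_ge[of "n+j"] by linarith
qed simp

lemma obar_term_Suc:
  "obar_term g n (Suc k) = obar_term g n k / real (\<Sum>i\<le>n + Suc k. g i)"
  unfolding obar_term_def by simp

lemma obar_term_decreasing:
  shows "obar_term g n (Suc k) < obar_term g n k"
proof -
  have "1 < real (\<Sum>i\<le>n + Suc k. g i)" using partial_sum_ge[of "n + Suc k"] by simp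
  then show ?thesis
    using obar_term_pos by (simp add: obar_term_Suc divide_less_eq)
qed

lemma obar_term_LIMSEQ_zero:
  shows "obar_term g n \<longlonglongrightarrow> 0"
proof (rule Lim_null_comparison[OF _ LIMSEQ_power_zero[of "1/2::real"]])
  have "obar_term g n k \<le> (1/2)^k" for k
  proof (induction k)
    case 0
    then show ?case unfolding obar_term_def using partial_sum_ge[of n] by simp
  next
    case (Suc k)
    have "2 \<le> real (\<Sum>i\<le>n + Suc k. g i)" using partial_sum_ge[of "n + Suc k"] by simp
    then have "obar_term g n (Suc k) \<le> obar_term g n k / 2"
      unfolding obar_term_Suc using obar_term_pos
      by (intro divide_left_mono) (auto simp: less_imp_le)
    with Suc show ?case by simp
  qed
  then show "\<forall>\<^sub>F k in sequentially. norm (obar_term g n k) \<le> (1/2)^k"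
    using obar_term_pos by (simp add: less_imp_le)
qed simp

lemma obar_tail_bounds:
  shows "obar_term g n 0 - obar_term g n 1 < obar_tail g n" "obar_tail g n < obar_term g n 0"
  unfolding obar_tail_def
  by (intro alternating_series_strict_bounds obar_term_LIMSEQ_zero
      obar_term_pos obar_term_decreasing)+

lemma obar_tail_recursion:
  shows "obar_tail g (Suc n) = 1 - real (\<Sum>i\<le>n. g i) * obar_tail g n"
proof -
  define Q where "Q = real (\<Sum>i\<le>n. g i)"
  have "Q \<ge> 1" using partial_sum_ge[of n] by (simp add: Q_def)
  have summable: "summable (\<lambda>k. (-1)^k * obar_term g m k)" for m
    using summable_Leibniz'(1)[OF obar_term_LIMSEQ_zero] obar_term_pos
      obar_term_decreasing by (simp add: less_imp_le)
  have shift: "(-1)^Suc k * obar_term g n (Suc k) = - ((-1)^k * obar_term g (Suc n) k) / Q" for k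
    unfolding obar_term_def Q_def by (simp add: prod.atMost_Suc_shift del: prod.atMost_Suc)
  have "obar_tail g n - obar_term g n 0 = (\<Sum>k. (-1)^Suc k * obar_term g n (Suc k))"
    unfolding obar_tail_def using suminf_split_head[OF summable] by simp
  also have "\<dots> = - obar_tail g (Suc n) / Q"
    unfolding shift obar_tail_def using summable[of "Suc n"]
    by (simp add: suminf_divide suminf_minus summable_minus summable_divide)
  finally have "obar_tail g n - 1 / Q = - obar_tail g (Suc n) / Q" by (simp add: obar_term_def Q_def)
  then have "Q * (obar_tail g (Suc n) + Q * obar_tail g n) = Q * 1"
    using \<open>Q \<ge> 1\<close> by (simp add: field_simps)
  then have "obar_tail g (Suc n) + Q * obar_tail g n = 1" using \<open>Q \<ge> 1\<close> by (subst (asm) mult_left_cancel) auto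
  then show ?thesis unfolding Q_def[symmetric] by simp
qed

lemma floor_inverse_obar_tail:
  shows "\<lfloor>1 / obar_tail g n\<rfloor> = int (\<Sum>i\<le>n. g i)"
proof -
  define Q where "Q j = real (\<Sum>i\<le>j. g i)" for j
  have Q1: "Q n \<ge> 1" and QSuc: "Q (Suc n) \<ge> Q n + 1"
    using partial_sum_ge[of n] digits_ge_1[of "Suc n"] by (simp_all add: Q_def)
  have "0 < Q n * (Q n + 1)" using Q1 by simp
  then have "1 / (Q n + 1) = 1 / Q n - 1 / (Q n * (Q n + 1))"
    using Q1 by (simp add: field_simps)
  also have "\<dots> \<le> obar_term g n 0 - obar_term g n 1"
  proof -
    have "1 / (Q n * Q (Suc n)) \<le> 1 / (Q n * (Q n + 1))"
      using Q1 QSuc by (intro divide_left_mono mult_left_mono mult_pos_pos) auto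
    then show ?thesis by (simp add: obar_term_def Q_def)
  qed
  finally have lower: "1 / (Q n + 1) < obar_tail g n"
    using obar_tail_bounds(1)[of n] by linarith
  have upper: "obar_tail g n < 1 / Q n"
    using obar_tail_bounds(2)[of n] by (simp add: obar_term_def Q_def)
  have "obar_tail g n > 0" using lower Q1 by (smt (verit) divide_pos_pos)
  then have "Q n < 1 / obar_tail g n" "1 / obar_tail g n < Q n + 1"
    using lower upper Q1 by (simp_all add: field_simps)
  then show ?thesis by (simp add: Q_def floor_eq_iff)
qed

end

lemma obar_expansion_unique:
  assumes "Obar_expansion g x"
  shows "g = obar_digit x"
proof
  have g1: "\<And>k. g k \<ge> 1" and "(\<lambda>k. (-1)^k * obar_term g 0 k) sums x"
    using assms unfolding Obar_expansion_def obar_term_def by auto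
  then have "obar_tail g 0 = x" unfolding obar_tail_def by (simp add: sums_iff)
  then have rem: "obar_rem x n = obar_tail g n" for n
    by (induction n) (simp_all add: floor_inverse_obar_tail[of g, OF g1] obar_tail_recursion[of g, OF g1])
  have psum: "obar_psum x (Suc n) = (\<Sum>i\<le>n. g i)" for n
    using floor_inverse_obar_tail[of g n, OF g1] by (simp add: rem del: of_nat_sum)
  fix n
  show "g n = obar_digit x n"
    by (cases n) (simp_all add: obar_digit_def psum del: obar_psum.simps(2))
qed

section \<open>The law of the state of the algorithm\<close>

lemma obar_rem_measurable[measurable]: "(\<lambda>x. obar_rem x k) \<in> borel_measurable borel"
  by (induction k) auto

lemma obar_psum_measurable[measurable]: "(\<lambda>x. obar_psum x k) \<in> borel \<rightarrow>\<^sub>M count_space UNIV"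
  by (cases k) auto

lemma obar_digit_measurable[measurable]: "(\<lambda>x. obar_digit x k) \<in> borel \<rightarrow>\<^sub>M count_space UNIV"
  unfolding obar_digit_def by measurable

lemma floor_inverse_eq_iff:
  fixes y :: real and m :: nat
  assumes "0 < m"
  shows "\<lfloor>1/y\<rfloor> = int m \<longleftrightarrow> y \<in> {1 / (real m + 1)<..1 / real m}"
proof
  assume "\<lfloor>1/y\<rfloor> = int m"
  then have "real m \<le> 1/y" "1/y < real m + 1" by linarith+
  moreover from this have "0 < y" using assms by (smt (verit) of_nat_0_less_iff divide_le_0_iff)
  ultimately show "y \<in> {1 / (real m + 1)<..1 / real m}" using assms by (simp add: field_simps)
next
  assume y: "y \<in> {1 / (real m + 1)<..1 / real m}"
  then have "0 < y" by (smt (verit) divide_pos_pos of_nat_0_le_iff greaterThanAtMost_iff)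
  with assms y have "real m \<le> 1/y" "1/y < real m + 1" by (simp_all add: field_simps)
  then show "\<lfloor>1/y\<rfloor> = int m" by (simp add: floor_eq_iff)
qed

lemma emeasure_floor_inverse_eq:
  assumes "0 < n"
  shows "emeasure lborel {y::real. \<lfloor>1/y\<rfloor> = int n} = ennreal (1 / (real n * (real n + 1)))"
proof -
  have "{y::real. \<lfloor>1/y\<rfloor> = int n} = {1 / (real n + 1)<..1 / real n}"
    using floor_inverse_eq_iff[OF assms] by blast
  moreover have "1 / real n - 1 / (real n + 1) = 1 / (real n * (real n + 1))"
    using assms by (simp add: field_simps)
  moreover have "1 / (real n + 1) \<le> 1 / real n" using assms by (simp add: frac_le)
  ultimately show ?thesis by simp
qed

lemma nn_integral_obar_branch:
  fixes G :: "real \<Rightarrow> ennreal" and m :: nat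
  assumes [measurable]: "G \<in> borel_measurable borel" and "0 < m"
  shows "(\<integral>\<^sup>+y\<in>{1 / (real m + 1)<..1 / real m}. G (1 - real m * y) \<partial>lborel)
    = ennreal (1 / real m) * (\<integral>\<^sup>+z\<in>{0<..1 / (real m + 1)}. G z \<partial>lborel)"
proof -
  define f where "f z = G z * indicator {0..<1 / (real m + 1)} z" for z
  have [measurable]: "f \<in> borel_measurable borel" unfolding f_def by measurable
  have branch: "1 + (- real m) * y \<in> {0..<1 / (real m + 1)} \<longleftrightarrow> y \<in> {1 / (real m + 1)<..1 / real m}" for y
  proof -
    have "0 \<le> 1 - real m * y \<longleftrightarrow> y \<le> 1 / real m" using assms(2) by (simp add: field_simps)
    moreover have "1 - real m * y < 1 / (real m + 1) \<longleftrightarrow> real m * (1 / (real m + 1)) < real m * y"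
      by (simp add: field_simps)
    moreover have "real m * (1 / (real m + 1)) < real m * y \<longleftrightarrow> 1 / (real m + 1) < y"
      using assms(2) by (intro mult_less_cancel_left_pos) simp
    ultimately show ?thesis by auto
  qed
  have "(\<integral>\<^sup>+z\<in>{0<..1 / (real m + 1)}. G z \<partial>lborel) = (\<integral>\<^sup>+z. f z \<partial>lborel)"
  proof (rule nn_integral_cong_AE)
    show "AE z in lborel. G z * indicator {0<..1 / (real m + 1)} z = f z"
      using AE_lborel_singleton[of 0] AE_lborel_singleton[of "1 / (real m + 1)"]
      by eventually_elim (auto simp: f_def indicator_def)
  qed
  also have "\<dots> = ennreal (real m) * (\<integral>\<^sup>+y. f (1 + (- real m) * y) \<partial>lborel)"
    using nn_integral_real_affine[of f "- real m" 1] assms(2) by simp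
  also have "(\<lambda>y. f (1 + (- real m) * y)) = (\<lambda>y. G (1 - real m * y) * indicator {1 / (real m + 1)<..1 / real m} y)"
    unfolding f_def indicator_def using branch by (auto simp: fun_eq_iff)
  finally have "ennreal (1 / real m) * (\<integral>\<^sup>+z\<in>{0<..1 / (real m + 1)}. G z \<partial>lborel)
      = (ennreal (1 / real m) * ennreal (real m)) * (\<integral>\<^sup>+y\<in>{1 / (real m + 1)<..1 / real m}. G (1 - real m * y) \<partial>lborel)"
    by (simp add: mult.assoc)
  also have "ennreal (1 / real m) * ennreal (real m) = 1" using assms(2) by (simp flip: ennreal_mult)
  finally show ?thesis by simp
qed

lemma nn_integral_obar_step:
  fixes G :: "nat \<Rightarrow> real \<Rightarrow> ennreal" and Q :: nat
  assumes [measurable]: "\<And>m. G m \<in> borel_measurable borel"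
  shows "(\<integral>\<^sup>+y\<in>{0<..1 / (real Q + 1)}. G (nat \<lfloor>1/y\<rfloor>) (1 - \<lfloor>1/y\<rfloor> * y) \<partial>lborel)
    = (\<Sum>m. (if Q < m then ennreal (1 / real m) else 0) * (\<integral>\<^sup>+z\<in>{0<..1 / (real m + 1)}. G m z \<partial>lborel))"
proof -
  define A where "A m = (if Q < m then {1 / (real m + 1)<..1 / real m} else {})" for m :: nat
  have A_iff: "y \<in> A m \<longleftrightarrow> y \<in> {0<..1 / (real Q + 1)} \<and> \<lfloor>1/y\<rfloor> = int m" for y :: real and m
  proof
    assume "y \<in> A m"
    then have "Q < m" and y: "y \<in> {1 / (real m + 1)<..1 / real m}" by (auto simp: A_def split: if_splits)
    have "0 < 1 / (real m + 1)" by simp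
    with y have "0 < y" by (meson greaterThanAtMost_iff less_trans)
    moreover have "1 / real m \<le> 1 / (real Q + 1)" using \<open>Q < m\<close> by (intro divide_left_mono) auto
    ultimately show "y \<in> {0<..1 / (real Q + 1)} \<and> \<lfloor>1/y\<rfloor> = int m"
      using y \<open>Q < m\<close> floor_inverse_eq_iff[of m y] by auto
  next
    assume y: "y \<in> {0<..1 / (real Q + 1)} \<and> \<lfloor>1/y\<rfloor> = int m"
    then have "real Q + 1 \<le> 1/y" by (auto simp: field_simps)
    with y have "Q < m" by linarith
    with y show "y \<in> A m" using floor_inverse_eq_iff[of m y] by (simp add: A_def)
  qed
  have "disjoint_family A" by (auto simp: disjoint_family_on_def A_iff)
  have pointwise: "G (nat \<lfloor>1/y\<rfloor>) (1 - \<lfloor>1/y\<rfloor> * y) * indicator {0<..1 / (real Q + 1)} y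
      = (\<Sum>m. G m (1 - real m * y) * indicator (A m) y)" for y :: real
  proof (cases "y \<in> {0<..1 / (real Q + 1)}")
    case True
    then have "y \<in> A (nat \<lfloor>1/y\<rfloor>)" unfolding A_iff by (auto simp: field_simps)
    with True show ?thesis
      using suminf_cmult_indicator[OF \<open>disjoint_family A\<close>, of y "nat \<lfloor>1/y\<rfloor>" "\<lambda>m. G m (1 - real m * y)"]
      by (simp add: A_iff)
  next
    case False
    then have "y \<notin> A m" for m by (auto simp: A_iff)
    with False show ?thesis by simp
  qed
  have "(\<integral>\<^sup>+y\<in>{0<..1 / (real Q + 1)}. G (nat \<lfloor>1/y\<rfloor>) (1 - \<lfloor>1/y\<rfloor> * y) \<partial>lborel)
      = (\<Sum>m. \<integral>\<^sup>+y. G m (1 - real m * y) * indicator (A m) y \<partial>lborel)"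
    unfolding pointwise by (rule nn_integral_suminf) (measurable, simp add: A_def)
  also have "\<dots> = (\<Sum>m. (if Q < m then ennreal (1 / real m) else 0) * (\<integral>\<^sup>+z\<in>{0<..1 / (real m + 1)}. G m z \<partial>lborel))"
    by (intro suminf_cong) (simp add: A_def nn_integral_obar_branch)
  finally show ?thesis .
qed

lemma ennreal_suminf_comm:
  fixes f :: "nat \<Rightarrow> nat \<Rightarrow> ennreal"
  shows "(\<Sum>i. \<Sum>j. f i j) = (\<Sum>j. \<Sum>i. f i j)"
proof -
  have "(\<Sum>i. \<Sum>j. f i j) = (\<integral>\<^sup>+i. (\<Sum>j. f i j) \<partial>count_space UNIV)"
    by (simp add: nn_integral_count_space_nat)
  also have "\<dots> = (\<Sum>j. \<integral>\<^sup>+i. f i j \<partial>count_space UNIV)"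
    by (rule nn_integral_suminf) simp
  finally show ?thesis by (simp add: nn_integral_count_space_nat)
qed

lemma obar_state_distribution:
  "\<exists>c::nat \<Rightarrow> ennreal. (\<forall>Q<k. c Q = 0) \<and>
     (\<forall>F::nat \<Rightarrow> real \<Rightarrow> ennreal. (\<forall>Q. F Q \<in> borel_measurable borel) \<longrightarrow>
       (\<integral>\<^sup>+x\<in>{0<..1}. F (obar_psum x k) (obar_rem x k) \<partial>lborel)
         = (\<Sum>Q. c Q * (\<integral>\<^sup>+y\<in>{0<..1 / (real Q + 1)}. F Q y \<partial>lborel)))"
proof (induction k)
  case 0
  have "(\<Sum>Q. of_bool (Q = 0) * I Q) = I 0" for I :: "nat \<Rightarrow> ennreal"
    by (subst suminf_finite[of "{0}"]) auto
  then show ?case by (intro exI[of _ "\<lambda>Q. of_bool (Q = 0)"]) simp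
next
  case (Suc k)
  then obtain c :: "nat \<Rightarrow> ennreal" where c0: "\<forall>Q<k. c Q = 0" and
    cF: "\<And>F. (\<forall>Q. F Q \<in> borel_measurable borel) \<Longrightarrow>
      (\<integral>\<^sup>+x\<in>{0<..1}. F (obar_psum x k) (obar_rem x k) \<partial>lborel)
        = (\<Sum>Q. c Q * (\<integral>\<^sup>+y\<in>{0<..1 / (real Q + 1)}. F Q y \<partial>lborel))"
    by blast
  define w :: "nat \<Rightarrow> nat \<Rightarrow> ennreal" where "w Q m = (if Q < m then ennreal (1 / real m) else 0)" for Q m
  define c' where "c' m = (\<Sum>Q. c Q * w Q m)" for m
  have "c' m = 0" if "m < Suc k" for m
  proof -
    have "(\<lambda>Q. c Q * w Q m) = (\<lambda>_. 0)" using c0 that by (auto simp: w_def)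
    then show ?thesis by (simp add: c'_def)
  qed
  moreover have "(\<integral>\<^sup>+x\<in>{0<..1}. F (obar_psum x (Suc k)) (obar_rem x (Suc k)) \<partial>lborel)
      = (\<Sum>m. c' m * (\<integral>\<^sup>+y\<in>{0<..1 / (real m + 1)}. F m y \<partial>lborel))"
    if "\<forall>Q. F Q \<in> borel_measurable borel" for F
  proof -
    have [measurable]: "\<And>Q. F Q \<in> borel_measurable borel" using that by blast
    define J where "J m = (\<integral>\<^sup>+y\<in>{0<..1 / (real m + 1)}. F m y \<partial>lborel)" for m
    have "(\<integral>\<^sup>+x\<in>{0<..1}. F (obar_psum x (Suc k)) (obar_rem x (Suc k)) \<partial>lborel)
        = (\<Sum>Q. c Q * (\<integral>\<^sup>+y\<in>{0<..1 / (real Q + 1)}. F (nat \<lfloor>1/y\<rfloor>) (1 - \<lfloor>1/y\<rfloor> * y) \<partial>lborel))"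
      using cF[of "\<lambda>_ y. F (nat \<lfloor>1/y\<rfloor>) (1 - \<lfloor>1/y\<rfloor> * y)"] by simp measurable
    also have "\<dots> = (\<Sum>Q. \<Sum>m. c Q * w Q m * J m)"
      by (simp add: nn_integral_obar_step w_def J_def mult.assoc)
    also have "\<dots> = (\<Sum>m. c' m * J m)"
      by (subst ennreal_suminf_comm) (simp add: c'_def)
    finally show ?thesis unfolding J_def .
  qed
  ultimately show ?case by blast
qed

lemma obar_digit_eq_iff:
  assumes "1 \<le> i"
  shows "obar_digit x k = i \<longleftrightarrow> \<lfloor>1 / obar_rem x k\<rfloor> = int (obar_psum x k + i)"
  using assms by (auto simp: obar_digit_def)

lemma emeasure_obar_digit_eq_le:
  assumes "1 \<le> i"
  shows "emeasure lborel ({0<..1} \<inter> {x. obar_digit x k = i}) \<le> ennreal (1 / (real k + 1))"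
proof -
  obtain c :: "nat \<Rightarrow> ennreal" where c0: "\<forall>Q<k. c Q = 0" and
    cF: "\<And>F. (\<forall>Q. F Q \<in> borel_measurable borel) \<Longrightarrow>
      (\<integral>\<^sup>+x\<in>{0<..1}. F (obar_psum x k) (obar_rem x k) \<partial>lborel)
        = (\<Sum>Q. c Q * (\<integral>\<^sup>+y\<in>{0<..1 / (real Q + 1)}. F Q y \<partial>lborel))"
    using obar_state_distribution[of k] by blast
  have mass: "(\<Sum>Q. c Q * ennreal (1 / (real Q + 1))) = 1"
    using cF[of "\<lambda>_ _. 1"] by simp
  define F :: "nat \<Rightarrow> real \<Rightarrow> ennreal" where "F Q y = indicator {y. \<lfloor>1/y\<rfloor> = int (Q + i)} y" for Q y
  have [measurable]: "F Q \<in> borel_measurable borel" for Q unfolding F_def by measurable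
  have "emeasure lborel ({0<..1} \<inter> {x. obar_digit x k = i})
      = (\<integral>\<^sup>+x. indicator ({0<..1} \<inter> {x. obar_digit x k = i}) x \<partial>lborel)"
    by (rule nn_integral_indicator[symmetric]) measurable
  also have "\<dots> = (\<integral>\<^sup>+x\<in>{0<..1}. F (obar_psum x k) (obar_rem x k) \<partial>lborel)"
    by (intro nn_integral_cong) (auto simp: F_def obar_digit_eq_iff[OF assms] indicator_def)
  also have "\<dots> = (\<Sum>Q. c Q * (\<integral>\<^sup>+y\<in>{0<..1 / (real Q + 1)}. F Q y \<partial>lborel))"
    by (rule cF) simp
  also have "\<dots> \<le> (\<Sum>Q. c Q * ennreal (1 / (real Q + 1)) * ennreal (1 / (real k + 1)))"
  proof (intro suminf_le summableI)
    fix Q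
    show "c Q * (\<integral>\<^sup>+y\<in>{0<..1 / (real Q + 1)}. F Q y \<partial>lborel)
      \<le> c Q * ennreal (1 / (real Q + 1)) * ennreal (1 / (real k + 1))"
    proof (cases "Q < k")
      case False
      define n where "n = Q + i"
      have "(\<integral>\<^sup>+y\<in>{0<..1 / (real Q + 1)}. F Q y \<partial>lborel) \<le> (\<integral>\<^sup>+y. F Q y \<partial>lborel)"
        by (intro nn_integral_mono) (simp add: indicator_def)
      also have "\<dots> = ennreal (1 / (real n * (real n + 1)))"
        using emeasure_floor_inverse_eq[of n] assms by (simp add: F_def n_def)
      also have "\<dots> \<le> ennreal (1 / (real Q + 1) * (1 / (real k + 1)))"
      proof (intro ennreal_leI)
        have "real Q + 1 \<le> real n + 1" "real k + 1 \<le> real n" using False assms by (auto simp: n_def)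
        then have "1 / (real n + 1) * (1 / real n) \<le> 1 / (real Q + 1) * (1 / (real k + 1))"
          by (intro mult_mono divide_left_mono) auto
        then show "1 / (real n * (real n + 1)) \<le> 1 / (real Q + 1) * (1 / (real k + 1))"
          by (simp add: mult.commute)
      qed
      also have "\<dots> = ennreal (1 / (real Q + 1)) * ennreal (1 / (real k + 1))"
        by (rule ennreal_mult) auto
      finally show ?thesis by (simp add: mult.assoc mult_left_mono)
    qed (simp add: c0)
  qed
  also have "\<dots> = ennreal (1 / (real k + 1))" using mass by simp
  finally show ?thesis .
qed

section \<open>Frequencies of the symbols\<close>

lemma AE_LIMSEQ_zero_if_summable_nn_integral:
  fixes f :: "nat \<Rightarrow> 'a \<Rightarrow> real"
  assumes [measurable]: "\<And>j. f j \<in> borel_measurable M"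
    and nonneg: "\<And>j x. 0 \<le> f j x"
    and finite: "(\<Sum>j. \<integral>\<^sup>+x. ennreal (f j x) \<partial>M) \<noteq> top"
  shows "AE x in M. (\<lambda>j. f j x) \<longlonglongrightarrow> 0"
proof -
  have "(\<integral>\<^sup>+x. (\<Sum>j. ennreal (f j x)) \<partial>M) \<noteq> \<infinity>"
    using finite by (subst nn_integral_suminf) (auto simp: infinity_ennreal_def)
  then have "AE x in M. (\<Sum>j. ennreal (f j x)) \<noteq> \<infinity>"
    by (intro nn_integral_PInf_AE) auto
  then show ?thesis
  proof eventually_elim
    case (elim x)
    then have "summable (\<lambda>j. f j x)" using nonneg by (intro summable_suminf_not_top) auto
    then show ?case by (rule summable_LIMSEQ_zero)
  qed
qed

lemma LIMSEQ_div_zero_if_geometric_subseq: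
  fixes N :: "nat \<Rightarrow> nat" and b :: nat
  assumes mono: "mono N" and b: "2 \<le> b"
    and subseq: "(\<lambda>j. real (N (b^j)) / real (b^j)) \<longlonglongrightarrow> 0"
  shows "(\<lambda>n. real (N n) / real n) \<longlonglongrightarrow> 0"
proof (rule LIMSEQ_I)
  fix r :: real
  assume "0 < r"
  with b have "eventually (\<lambda>j. real (N (b^j)) / real (b^j) < r / b) sequentially"
    by (intro order_tendstoD(2)[OF subseq]) simp
  then obtain J where J: "\<And>j. J \<le> j \<Longrightarrow> real (N (b^j)) / real (b^j) < r / b"
    unfolding eventually_sequentially by blast
  show "\<exists>n0. \<forall>n\<ge>n0. norm (real (N n) / real n - 0) < r"
  proof (intro exI allI impI)
    fix n
    assume n: "Suc (b^J) \<le> n"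
    define j where "j = (LEAST j. n \<le> b^j)"
    have "n < 2^n" by (rule less_exp)
    also have "\<dots> \<le> b^n" using b by (rule power_mono) simp
    finally have "n \<le> b^j" unfolding j_def by (metis LeastI less_imp_le)
    have "J < j"
    proof (rule ccontr)
      assume "\<not> J < j"
      then have "b^j \<le> b^J" using b by (intro power_increasing) auto
      with n \<open>n \<le> b^j\<close> show False by simp
    qed
    have "\<not> n \<le> b^(j - 1)"
      using Least_le[of "\<lambda>j. n \<le> b^j" "j - 1"] \<open>J < j\<close> unfolding j_def[symmetric] by auto
    have below: "real (b^j) < real b * real n"
    proof -
      obtain m where j: "j = Suc m" using \<open>J < j\<close> by (cases j) auto
      with \<open>\<not> n \<le> b^(j - 1)\<close> have "b * b^m < b * n" using b by simp
      then show ?thesis unfolding j by (simp only: power_Suc of_nat_mult[symmetric] of_nat_less_iff)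
    qed
    have "real (N n) \<le> real (N (b^j))" using monoD[OF mono \<open>n \<le> b^j\<close>] by simp
    also have "\<dots> < r / b * real (b^j)" using J[of j] \<open>J < j\<close> b by (simp add: divide_less_eq)
    also have "\<dots> \<le> r / b * (real b * real n)" using below \<open>0 < r\<close> by (intro mult_left_mono) auto
    also have "\<dots> = r * real n" using b by simp
    finally show "norm (real (N n) / real n - 0) < r" using n by (simp add: divide_less_eq)
  qed
qed

lemma sum_inverse_le_two_sqrt: "(\<Sum>k<n. 1 / (real k + 1)) \<le> 2 * sqrt (real n)"
proof (induction n)
  case 0
  then show ?case by simp
next
  case (Suc n)
  define s t where "s = sqrt (real n + 1)" and "t = sqrt (real n)"
  have "1 \<le> s" "t \<le> s" "s * s = real n + 1" "t * t = real n" by (simp_all add: s_def t_def)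
  have "1 / s \<le> 2 * s - 2 * t"
  proof -
    have "1 = (s - t) * (s + t)" using \<open>s * s = real n + 1\<close> \<open>t * t = real n\<close> by (simp add: algebra_simps)
    also have "\<dots> \<le> (s - t) * (2 * s)" using \<open>t \<le> s\<close> by (intro mult_left_mono) auto
    finally have "1 / s \<le> (s - t) * (2 * s) / s" using \<open>1 \<le> s\<close> by (intro divide_right_mono) auto
    also have "\<dots> = 2 * s - 2 * t" using \<open>1 \<le> s\<close> by (simp add: field_simps)
    finally show ?thesis .
  qed
  moreover have "1 / (real n + 1) \<le> 1 / s"
  proof -
    have "s \<le> s * s" using mult_left_mono[OF \<open>1 \<le> s\<close>, of s] \<open>1 \<le> s\<close> by simp
    then show ?thesis
      using \<open>1 \<le> s\<close> unfolding \<open>s * s = real n + 1\<close>[symmetric] by (intro divide_left_mono) auto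
  qed
  ultimately have "1 / (real n + 1) \<le> 2 * sqrt (real n + 1) - 2 * sqrt (real n)"
    unfolding s_def t_def by linarith
  with Suc show ?case by (simp add: add.commute)
qed

definition obar_digit_count :: "nat \<Rightarrow> real \<Rightarrow> nat \<Rightarrow> nat" where
  "obar_digit_count i x n = card {k. k < n \<and> obar_digit x k = i}"

lemma mono_obar_digit_count: "mono (obar_digit_count i x)"
  unfolding obar_digit_count_def by (intro monoI card_mono) auto

lemma obar_digit_count_eq_sum:
  "of_nat (obar_digit_count i x n) = (\<Sum>k<n. indicator {x. obar_digit x k = i} x :: 'a::semiring_1)"
proof -
  have "{k. k < n \<and> obar_digit x k = i} = {..<n} \<inter> {k. obar_digit x k = i}" by auto
  then show ?thesis by (simp add: obar_digit_count_def indicator_def)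
qed

lemma obar_digit_count_measurable[measurable]:
  "(\<lambda>x. real (obar_digit_count i x n)) \<in> borel_measurable borel"
  unfolding obar_digit_count_eq_sum by measurable

lemma nn_integral_obar_digit_count_le:
  assumes "1 \<le> i"
  shows "(\<integral>\<^sup>+x\<in>{0<..1}. ennreal (real (obar_digit_count i x n)) \<partial>lborel) \<le> ennreal (2 * sqrt (real n))"
proof -
  have "(\<integral>\<^sup>+x\<in>{0<..1}. ennreal (real (obar_digit_count i x n)) \<partial>lborel)
      = (\<integral>\<^sup>+x. (\<Sum>k<n. indicator ({0<..1} \<inter> {x. obar_digit x k = i}) x) \<partial>lborel)"
  proof (rule nn_integral_cong)
    fix x :: real
    have "ennreal (real (obar_digit_count i x n)) = (\<Sum>k<n. indicator {x. obar_digit x k = i} x)"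
      unfolding ennreal_of_nat_eq_real_of_nat[symmetric] by (rule obar_digit_count_eq_sum)
    then show "ennreal (real (obar_digit_count i x n)) * indicator {0<..1} x
        = (\<Sum>k<n. indicator ({0<..1} \<inter> {x. obar_digit x k = i}) x)"
      unfolding indicator_inter_arith sum_distrib_left[symmetric] by (simp add: mult.commute)
  qed
  also have "\<dots> = (\<Sum>k<n. emeasure lborel ({0<..1} \<inter> {x. obar_digit x k = i}))"
    by (subst nn_integral_sum) auto
  also have "\<dots> \<le> (\<Sum>k<n. ennreal (1 / (real k + 1)))"
    by (intro sum_mono emeasure_obar_digit_eq_le assms)
  also have "\<dots> \<le> ennreal (2 * sqrt (real n))"
    by (simp add: sum_ennreal sum_inverse_le_two_sqrt)
  finally show ?thesis .
qed

lemma nn_integral_obar_digit_count_pow4_le: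
  assumes "1 \<le> i"
  shows "(\<integral>\<^sup>+x. ennreal (indicator {0<..1} x * real (obar_digit_count i x (4^j)) / 4^j) \<partial>lborel)
    \<le> ennreal (2 * (1/2)^j)"
proof -
  have "real (4^j) = (2^j)^2"
    by (simp only: of_nat_power of_nat_numeral power_mult_distrib[symmetric] power2_eq_square) simp
  then have sqrt_eq: "sqrt (real (4^j)) = 2^j"
    by (simp only: real_sqrt_unique zero_le_power zero_le_numeral)
  have "(4::real)^j = (2 * 2)^j" by simp
  then have geom: "1 / 4^j * (2 * 2^j) = 2 * (1/2::real)^j"
    unfolding power_mult_distrib by (simp add: power_one_over)
  have "(\<integral>\<^sup>+x. ennreal (indicator {0<..1} x * real (obar_digit_count i x (4^j)) / 4^j) \<partial>lborel)
      = ennreal (1 / 4^j) * (\<integral>\<^sup>+x\<in>{0<..1}. ennreal (real (obar_digit_count i x (4^j))) \<partial>lborel)"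
  proof -
    have "ennreal (indicator {0<..1} x * real (obar_digit_count i x (4^j)) / 4^j)
        = ennreal (1 / 4^j) * (ennreal (real (obar_digit_count i x (4^j))) * indicator {0<..1} x)" for x
      by (cases "x \<in> {0<..1}")
        (simp_all add: ennreal_mult' divide_ennreal_def mult.commute flip: divide_ennreal)
    then show ?thesis by (simp add: nn_integral_cmult)
  qed
  also have "\<dots> \<le> ennreal (1 / 4^j) * ennreal (2 * sqrt (real (4^j)))"
    by (intro mult_left_mono nn_integral_obar_digit_count_le assms) simp
  also have "\<dots> = ennreal (1 / 4^j * (2 * 2^j))"
    unfolding sqrt_eq by (rule ennreal_mult[symmetric]) simp_all
  also have "\<dots> = ennreal (2 * (1/2)^j)"
    unfolding geom ..
  finally show ?thesis .
qed

lemma AE_obar_digit_density_zero: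
  assumes "1 \<le> i"
  shows "AE x in lborel. x \<in> {0<..1} \<longrightarrow> (\<lambda>n. real (obar_digit_count i x n) / real n) \<longlonglongrightarrow> 0"
proof -
  define f where "f j x = indicator {0<..1} x * real (obar_digit_count i x (4^j)) / 4^j" for j and x :: real
  have [measurable]: "f j \<in> borel_measurable lborel" for j unfolding f_def by measurable
  have "(\<integral>\<^sup>+x. ennreal (f j x) \<partial>lborel) \<le> ennreal (2 * (1/2)^j)" for j
    unfolding f_def by (rule nn_integral_obar_digit_count_pow4_le[OF assms])
  then have "(\<Sum>j. \<integral>\<^sup>+x. ennreal (f j x) \<partial>lborel) \<le> (\<Sum>j. ennreal (2 * (1/2)^j))"
    by (intro suminf_le) auto
  moreover have "(\<Sum>j. ennreal (2 * (1/2)^j)) \<noteq> top"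
    by (intro ennreal_suminf_neq_top summable_mult summable_geometric) auto
  ultimately have "(\<Sum>j. \<integral>\<^sup>+x. ennreal (f j x) \<partial>lborel) \<noteq> top"
    by (rule neq_top_trans[rotated])
  then have "AE x in lborel. (\<lambda>j. f j x) \<longlonglongrightarrow> 0"
    by (rule AE_LIMSEQ_zero_if_summable_nn_integral[rotated 2]) (simp_all add: f_def)
  then show ?thesis
  proof eventually_elim
    case (elim x)
    show ?case
    proof
      assume "x \<in> {0<..1}"
      with elim have "(\<lambda>j. real (obar_digit_count i x (4^j)) / real (4^j)) \<longlonglongrightarrow> 0"
        by (simp add: f_def)
      then show "(\<lambda>n. real (obar_digit_count i x n) / real n) \<longlonglongrightarrow> 0"
        using LIMSEQ_div_zero_if_geometric_subseq[OF mono_obar_digit_count, of 4] by simp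
    qed
  qed
qed

lemma Obar_symbol_eq_obar_digit:
  assumes "x \<notin> \<rat>" "0 < x" "x < 1"
  shows "Obar_symbol x k = obar_digit x (k - 1)"
proof -
  have "(THE g. Obar_expansion g x) = obar_digit x"
    by (rule the_equality[where P = "\<lambda>g. Obar_expansion g x", OF obar_expansion_obar_digit[OF assms]])
      (rule obar_expansion_unique)
  then show ?thesis unfolding Obar_symbol_def by simp
qed

lemma Obar_count_eq_obar_digit_count:
  assumes "x \<notin> \<rat>" "0 < x" "x < 1"
  shows "Obar_count i x n = obar_digit_count i x n"
proof -
  have "{k \<in> {1..n}. Obar_symbol x k = i} = Suc ` {k. k < n \<and> obar_digit x k = i}"
  proof (intro equalityI subsetI)
    fix k
    assume "k \<in> {k \<in> {1..n}. Obar_symbol x k = i}"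
    then show "k \<in> Suc ` {k. k < n \<and> obar_digit x k = i}"
      by (intro image_eqI[of _ _ "k - 1"]) (auto simp: Obar_symbol_eq_obar_digit[OF assms])
  qed (auto simp: Obar_symbol_eq_obar_digit[OF assms])
  then show ?thesis
    unfolding Obar_count_def obar_digit_count_def by (simp add: card_image)
qed

theorem lemma1:
  shows "AE x in lborel. x \<in> {0..1} \<longrightarrow>
           (\<forall>i::nat. i \<ge> 1 \<longrightarrow>
              (\<lambda>n. real (Obar_count i x n) / real n) \<longlonglongrightarrow> 0)"
proof -
  have "AE x in lborel. x \<notin> \<rat>"
    by (rule AE_not_in[OF countable_imp_null_set_lborel[OF countable_rat]])
  moreover have "AE x in lborel. x \<noteq> 1" by (rule AE_lborel_singleton)
  moreover have "AE x in lborel. \<forall>i. 1 \<le> i \<longrightarrow> x \<in> {0<..1} \<longrightarrow>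
      (\<lambda>n. real (obar_digit_count i x n) / real n) \<longlonglongrightarrow> 0"
  proof (subst AE_all_countable, intro allI)
    fix i :: nat
    show "AE x in lborel. 1 \<le> i \<longrightarrow> x \<in> {0<..1} \<longrightarrow>
        (\<lambda>n. real (obar_digit_count i x n) / real n) \<longlonglongrightarrow> 0"
      using AE_obar_digit_density_zero[of i] by (cases "1 \<le> i") simp_all
  qed
  ultimately show ?thesis
  proof eventually_elim
    case (elim x)
    have "x \<in> {0..1} \<Longrightarrow> 0 < x \<and> x < 1" using elim(1,2) by (cases "x = 0") auto
    then show ?case using elim(3) Obar_count_eq_obar_digit_count[OF elim(1)] by auto
  qed
qed

end
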